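(* Assume Second-order Absolute Morley. Then for every lightface projective set $A\subseteq 2^\omega$, either $|A|\leq\aleph_1$ or $A$ contains a perfect set.
   Context: Second-order Absolute Morley is the statement: for every second-order theory $T$ in a countable signature, either $T$ has at most $\aleph_1$ isomorphism classes of countable models, or there is a perfect set of pairwise non-isomorphic countable models of $T$. Here countable models with universe $\omega$ are identified with points of a Cantor space via the values of their relations (product topology), so "perfect set of models" means a nonempty closed set without isolated points in this space of codes; equivalently a continuous injection of $2^\omega$ into the space of models of $T$ whose images are pairwise non-isomorphic. A set $A\subseteq 2^\omega$ is lightface projective if it is definable over second-order arithmetic by a projective formula without real parameters. A perfect set is a nonempty closed subset of $2^\omega$ without isolated points. *)

theory Defs
  imports "HOL-Analysis.Analysis"
begin

datatype sof =
    Eq nat nat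
  | Rel nat "nat list"
  | RVar nat "nat list"
  | Neg sof
  | Conj sof sof
  | Ex nat sof
  | ExR nat nat sof

text \<open>A structure with universe omega, coded by the values of its relations:
 a point of the Cantor space (nat * nat list) => bool.\<close>
type_synonym code = "nat \<times> nat list \<Rightarrow> bool"

fun sat :: "code \<Rightarrow> (nat \<Rightarrow> nat) \<Rightarrow> (nat \<Rightarrow> nat list \<Rightarrow> bool) \<Rightarrow> sof \<Rightarrow> bool" where
  "sat M v V (Eq i j) = (v i = v j)"
| "sat M v V (Rel R is) = M (R, map v is)"
| "sat M v V (RVar X is) = V X (map v is)"
| "sat M v V (Neg \<phi>) = (\<not> sat M v V \<phi>)"
| "sat M v V (Conj \<phi> \<psi>) = (sat M v V \<phi> \<and> sat M v V \<psi>)"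
| "sat M v V (Ex i \<phi>) = (\<exists>a. sat M (v(i := a)) V \<phi>)"
| "sat M v V (ExR X n \<phi>) =
     (\<exists>P. (\<forall>xs. P xs \<longrightarrow> length xs = n) \<and> sat M v (V(X := P)) \<phi>)"

fun fvars :: "sof \<Rightarrow> nat set" where
  "fvars (Eq i j) = {i, j}"
| "fvars (Rel R is) = set is"
| "fvars (RVar X is) = set is"
| "fvars (Neg \<phi>) = fvars \<phi>"
| "fvars (Conj \<phi> \<psi>) = fvars \<phi> \<union> fvars \<psi>"
| "fvars (Ex i \<phi>) = fvars \<phi> - {i}"
| "fvars (ExR X n \<phi>) = fvars \<phi>"

fun frvars :: "sof \<Rightarrow> nat set" where
  "frvars (Eq i j) = {}"
| "frvars (Rel R is) = {}"
| "frvars (RVar X is) = {X}"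
| "frvars (Neg \<phi>) = frvars \<phi>"
| "frvars (Conj \<phi> \<psi>) = frvars \<phi> \<union> frvars \<psi>"
| "frvars (Ex i \<phi>) = frvars \<phi>"
| "frvars (ExR X n \<phi>) = frvars \<phi> - {X}"

definition sentence :: "sof \<Rightarrow> bool" where
  "sentence \<phi> \<longleftrightarrow> fvars \<phi> = {} \<and> frvars \<phi> = {}"

fun wf_sof :: "nat set \<Rightarrow> (nat \<Rightarrow> nat) \<Rightarrow> sof \<Rightarrow> bool" where
  "wf_sof \<sigma> ar (Eq i j) = True"
| "wf_sof \<sigma> ar (Rel R is) = (R \<in> \<sigma> \<and> length is = ar R)"
| "wf_sof \<sigma> ar (RVar X is) = True"
| "wf_sof \<sigma> ar (Neg \<phi>) = wf_sof \<sigma> ar \<phi>"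
| "wf_sof \<sigma> ar (Conj \<phi> \<psi>) = (wf_sof \<sigma> ar \<phi> \<and> wf_sof \<sigma> ar \<psi>)"
| "wf_sof \<sigma> ar (Ex i \<phi>) = wf_sof \<sigma> ar \<phi>"
| "wf_sof \<sigma> ar (ExR X n \<phi>) = wf_sof \<sigma> ar \<phi>"

text \<open>Satisfaction of a sentence (the assignment is irrelevant for sentences).\<close>
definition models :: "code \<Rightarrow> sof \<Rightarrow> bool" where
  "models M \<phi> \<longleftrightarrow> sat M (\<lambda>_. 0) (\<lambda>_ _. False) \<phi>"

definition second_order_theory :: "nat set \<Rightarrow> (nat \<Rightarrow> nat) \<Rightarrow> sof set \<Rightarrow> bool" where
  "second_order_theory \<sigma> ar T \<longleftrightarrow> (\<forall>\<phi>\<in>T. sentence \<phi> \<and> wf_sof \<sigma> ar \<phi>)"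

definition is_structure :: "nat set \<Rightarrow> (nat \<Rightarrow> nat) \<Rightarrow> code \<Rightarrow> bool" where
  "is_structure \<sigma> ar M \<longleftrightarrow> (\<forall>R xs. M (R, xs) \<longrightarrow> R \<in> \<sigma> \<and> length xs = ar R)"

definition Mods :: "nat set \<Rightarrow> (nat \<Rightarrow> nat) \<Rightarrow> sof set \<Rightarrow> code set" where
  "Mods \<sigma> ar T = {M. is_structure \<sigma> ar M \<and> (\<forall>\<phi>\<in>T. models M \<phi>)}"

definition iso :: "nat set \<Rightarrow> (nat \<Rightarrow> nat) \<Rightarrow> code \<Rightarrow> code \<Rightarrow> bool" where
  "iso \<sigma> ar M N \<longleftrightarrow> (\<exists>\<pi>::nat \<Rightarrow> nat. bij \<pi> \<and>
      (\<forall>R\<in>\<sigma>. \<forall>xs. length xs = ar R \<longrightarrow> (M (R, xs) \<longleftrightarrow> N (R, map \<pi> xs))))"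

definition iso_rel :: "nat set \<Rightarrow> (nat \<Rightarrow> nat) \<Rightarrow> code rel" where
  "iso_rel \<sigma> ar = {(M, N). iso \<sigma> ar M N}"

definition code_top :: "code topology" where
  "code_top = product_topology (\<lambda>_. discrete_topology (UNIV :: bool set)) UNIV"

definition code_space :: "nat set \<Rightarrow> (nat \<Rightarrow> nat) \<Rightarrow> code topology" where
  "code_space \<sigma> ar = subtopology code_top {M. is_structure \<sigma> ar M}"

definition cantor :: "(nat \<Rightarrow> bool) topology" where
  "cantor = product_topology (\<lambda>_. discrete_topology (UNIV :: bool set)) UNIV"

definition perfect_in :: "'a topology \<Rightarrow> 'a set \<Rightarrow> bool" where
  "perfect_in X P \<longleftrightarrow> P \<noteq> {} \<and> closedin X P \<and> P \<subseteq> X derived_set_of P"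

definition at_most_aleph1 :: "'a set \<Rightarrow> bool" where
  "at_most_aleph1 A \<longleftrightarrow> ordLeq3 (card_of A) (cardSuc natLeq)"

definition SO_Absolute_Morley :: bool where
  "SO_Absolute_Morley \<longleftrightarrow>
     (\<forall>(\<sigma>::nat set) (ar::nat \<Rightarrow> nat) (T::sof set). second_order_theory \<sigma> ar T \<longrightarrow>
        at_most_aleph1 (Mods \<sigma> ar T // iso_rel \<sigma> ar)
        \<or> (\<exists>P \<subseteq> Mods \<sigma> ar T. perfect_in (code_space \<sigma> ar) P \<and>
              (\<forall>M\<in>P. \<forall>N\<in>P. M \<noteq> N \<longrightarrow> \<not> iso \<sigma> ar M N)))"

text \<open>Second-order arithmetic as the standard structure on omega: symbol 0 is the graph
 of addition, symbol 1 the graph of multiplication, and symbol 2 a unary predicate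
 interpreting the real x (the free set variable of the defining formula).  A lightface
 projective formula is a parameter-free second-order formula over this structure.\<close>
definition arith_sig :: "nat set" where "arith_sig = {0, 1, 2}"

definition arith_ar :: "nat \<Rightarrow> nat" where
  "arith_ar R = (if R = 2 then 1 else 3)"

fun arith_struct :: "(nat \<Rightarrow> bool) \<Rightarrow> code" where
  "arith_struct x (R, xs) =
     (if R = 0 then (case xs of [a, b, c] \<Rightarrow> a + b = c | _ \<Rightarrow> False)
      else if R = 1 then (case xs of [a, b, c] \<Rightarrow> a * b = c | _ \<Rightarrow> False)
      else if R = 2 then (case xs of [a] \<Rightarrow> x a | _ \<Rightarrow> False)
      else False)"

definition lightface_projective :: "(nat \<Rightarrow> bool) set \<Rightarrow> bool" where
  "lightface_projective A \<longleftrightarrow>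
     (\<exists>\<phi>. sentence \<phi> \<and> wf_sof arith_sig arith_ar \<phi> \<and> A = {x. models (arith_struct x) \<phi>})"

end

theory Submission
  imports Defs
begin

text \<open>Add to the sentence \<open>\<phi>\<close> defining \<open>A\<close> the second-order Peano axioms for \<open>+\<close> and
  \<open>*\<close>. By Dedekind's categoricity theorem each model of this theory is isomorphic to
  \<open>(\<nat>, +, *, x)\<close> for exactly one real \<open>x\<close>, namely the one read off along the
  enumeration by zero and successor, and \<open>x \<in> A\<close>; conversely every \<open>x \<in> A\<close> arises.
  So the isomorphism classes of models are in bijection with \<open>A\<close>, which settles the case
  of at most \<open>\<aleph>\<^sub>1\<close> classes. Otherwise Absolute Morley yields a perfect set of pairwise
  non-isomorphic models. Reading off the real is continuous, because each bit only depends on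
  finitely many atomic facts, and injective on that set; the set is compact, so its image is
  a perfect subset of \<open>A\<close>.\<close>

section \<open>Invariance of satisfaction under isomorphism\<close>

lemma sat_cong_fvars:
  "(\<And>i. i \<in> fvars \<phi> \<Longrightarrow> v i = w i) \<Longrightarrow> sat M v V \<phi> = sat M w V \<phi>"
proof (induction \<phi> arbitrary: v w V)
  case (Rel R js)
  then have "map v js = map w js" by simp
  then show ?case by (simp only: sat.simps)
next
  case (RVar X js)
  then have "map v js = map w js" by simp
  then show ?case by (simp only: sat.simps)
next
  case (Neg \<phi>)
  then show ?case by (metis fvars.simps(4) sat.simps(4))
next
  case (Conj \<phi> \<psi>)
  have "sat M v V \<phi> = sat M w V \<phi>" "sat M v V \<psi> = sat M w V \<psi>"
    by (rule Conj.IH; use Conj.prems in simp)+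
  then show ?case by simp
next
  case (Ex i \<phi>)
  have "sat M (v(i := a)) V \<phi> = sat M (w(i := a)) V \<phi>" for a
    by (rule Ex.IH) (use Ex.prems in auto)
  then show ?case by simp
next
  case (ExR X n \<phi>)
  have "sat M v V' \<phi> = sat M w V' \<phi>" for V'
    by (rule ExR.IH) (use ExR.prems in simp)
  then show ?case by simp
qed simp

lemma ex_surj_reindex: "surj f \<Longrightarrow> (\<exists>x. P (f x)) = (\<exists>y. P y)"
  by (metis surj_f_inv_f)

lemma ex_relation_reindex:
  assumes "bij \<pi>"
  shows "(\<exists>P. (\<forall>xs. P xs \<longrightarrow> length xs = n) \<and> Q (P \<circ> map (inv \<pi>)))
       = (\<exists>P. (\<forall>xs. P xs \<longrightarrow> length xs = n) \<and> Q P)"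
proof -
  have "surj (\<lambda>P. P \<circ> map (inv \<pi>))"
  proof (rule surjI)
    fix P
    have "map \<pi> (map (inv \<pi>) xs) = xs" for xs
      using assms by (simp add: comp_def bij_is_surj surj_f_inv_f)
    then show "P \<circ> map \<pi> \<circ> map (inv \<pi>) = P"
      by (simp add: fun_eq_iff)
  qed
  have arity: "(\<forall>xs. (P \<circ> map (inv \<pi>)) xs \<longrightarrow> length xs = n) = (\<forall>xs. P xs \<longrightarrow> length xs = n)" for P
  proof
    assume "\<forall>xs. (P \<circ> map (inv \<pi>)) xs \<longrightarrow> length xs = n"
    then have "P (map (inv \<pi>) (map \<pi> ys)) \<Longrightarrow> length (map \<pi> ys) = n" for ys
      by (simp only: comp_apply)
    moreover have "map (inv \<pi>) (map \<pi> ys) = ys" for ys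
      using assms by (simp add: comp_def bij_is_inj)
    ultimately show "\<forall>ys. P ys \<longrightarrow> length ys = n" by simp
  qed (metis comp_apply length_map)
  have "(\<exists>P. (\<forall>xs. P xs \<longrightarrow> length xs = n) \<and> Q (P \<circ> map (inv \<pi>)))
      = (\<exists>P. (\<forall>xs. (P \<circ> map (inv \<pi>)) xs \<longrightarrow> length xs = n) \<and> Q (P \<circ> map (inv \<pi>)))"
    by (simp only: arity)
  also have "\<dots> = (\<exists>P. (\<forall>xs. P xs \<longrightarrow> length xs = n) \<and> Q P)"
    using \<open>surj (\<lambda>P. P \<circ> map (inv \<pi>))\<close>
    by (rule ex_surj_reindex[where P = "\<lambda>P. (\<forall>xs. P xs \<longrightarrow> length xs = n) \<and> Q P"])
  finally show ?thesis .
qed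

lemma sat_iso:
  assumes "bij \<pi>"
    and "\<And>R xs. R \<in> \<sigma> \<Longrightarrow> length xs = ar R \<Longrightarrow> M (R, xs) = N (R, map \<pi> xs)"
    and "wf_sof \<sigma> ar \<phi>"
  shows "sat M v V \<phi> = sat N (\<pi> \<circ> v) (\<lambda>X. V X \<circ> map (inv \<pi>)) \<phi>"
  using assms(3)
proof (induction \<phi> arbitrary: v V)
  case (Eq i j)
  then show ?case using assms(1) by (simp add: bij_is_inj inj_eq)
next
  case (Rel R js)
  then show ?case using assms(2)[of R "map v js"] by (simp add: comp_def)
next
  case (RVar X js)
  then show ?case using assms(1) by (simp add: comp_def bij_is_inj)
next
  case (Ex i \<phi>)
  have "sat M (v(i := a)) V \<phi> = sat N ((\<pi> \<circ> v)(i := \<pi> a)) (\<lambda>X. V X \<circ> map (inv \<pi>)) \<phi>" for a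
    using Ex.IH[of "v(i := a)" V] Ex.prems unfolding fun_upd_comp by (simp only: wf_sof.simps)
  then have "(\<exists>a. sat M (v(i := a)) V \<phi>) = (\<exists>a. sat N ((\<pi> \<circ> v)(i := \<pi> a)) (\<lambda>X. V X \<circ> map (inv \<pi>)) \<phi>)"
    by (simp only:)
  also have "\<dots> = (\<exists>b. sat N ((\<pi> \<circ> v)(i := b)) (\<lambda>X. V X \<circ> map (inv \<pi>)) \<phi>)"
    using bij_is_surj[OF assms(1)]
    by (rule ex_surj_reindex[where P = "\<lambda>b. sat N ((\<pi> \<circ> v)(i := b)) (\<lambda>X. V X \<circ> map (inv \<pi>)) \<phi>"])
  finally show ?case by (simp only: sat.simps)
next
  case (ExR X n \<phi>)
  let ?V = "\<lambda>X. V X \<circ> map (inv \<pi>)"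
  have upd: "(\<lambda>Y. (V(X := P)) Y \<circ> map (inv \<pi>)) = ?V(X := P \<circ> map (inv \<pi>))" for P
    by auto
  have "sat M v (V(X := P)) \<phi> = sat N (\<pi> \<circ> v) (?V(X := P \<circ> map (inv \<pi>))) \<phi>" for P
    using ExR.IH[of v "V(X := P)"] ExR.prems by (simp only: wf_sof.simps upd)
  then have "(\<exists>P. (\<forall>xs. P xs \<longrightarrow> length xs = n) \<and> sat M v (V(X := P)) \<phi>)
      = (\<exists>P. (\<forall>xs. P xs \<longrightarrow> length xs = n) \<and> sat N (\<pi> \<circ> v) (?V(X := P \<circ> map (inv \<pi>))) \<phi>)"
    by (simp only:)
  also have "\<dots> = (\<exists>P. (\<forall>xs. P xs \<longrightarrow> length xs = n) \<and> sat N (\<pi> \<circ> v) (?V(X := P)) \<phi>)"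
    using assms(1) by (rule ex_relation_reindex[where Q = "\<lambda>P. sat N (\<pi> \<circ> v) (?V(X := P)) \<phi>"])
  finally show ?case by (simp only: sat.simps)
next
  case (Neg \<phi>)
  then show ?case by (simp only: sat.simps wf_sof.simps)
next
  case (Conj \<phi> \<psi>)
  then show ?case by (simp only: sat.simps wf_sof.simps)
qed

lemma models_iso:
  assumes "bij \<pi>"
    and "\<And>R xs. R \<in> \<sigma> \<Longrightarrow> length xs = ar R \<Longrightarrow> M (R, xs) = N (R, map \<pi> xs)"
    and "wf_sof \<sigma> ar \<phi>" and "sentence \<phi>"
  shows "models M \<phi> = models N \<phi>"
proof -
  have "models M \<phi> = sat N (\<pi> \<circ> (\<lambda>_. 0)) (\<lambda>_ _. False) \<phi>"
    unfolding models_def using sat_iso[of \<pi> \<sigma> ar M N \<phi>] assms by (simp add: comp_def)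
  also have "\<dots> = models N \<phi>"
    unfolding models_def by (rule sat_cong_fvars) (use assms(4) in \<open>simp add: sentence_def\<close>)
  finally show ?thesis .
qed

lemma iso_refl: "iso \<sigma> ar M M"
  unfolding iso_def by (intro exI[of _ id]) simp

lemma iso_sym:
  assumes "iso \<sigma> ar M N" shows "iso \<sigma> ar N M"
proof -
  obtain \<pi> where \<pi>: "bij \<pi>" "\<forall>R\<in>\<sigma>. \<forall>xs. length xs = ar R \<longrightarrow> (M (R, xs) \<longleftrightarrow> N (R, map \<pi> xs))"
    using assms unfolding iso_def by blast
  have "N (R, ys) \<longleftrightarrow> M (R, map (inv \<pi>) ys)" if "R \<in> \<sigma>" "length ys = ar R" for R ys
    using \<pi> that by (simp add: comp_def bij_is_surj surj_f_inv_f)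
  then show ?thesis
    unfolding iso_def using \<pi>(1) bij_imp_bij_inv by blast
qed

lemma iso_trans:
  assumes "iso \<sigma> ar M N" "iso \<sigma> ar N K" shows "iso \<sigma> ar M K"
proof -
  obtain \<pi> where \<pi>: "bij \<pi>" "\<forall>R\<in>\<sigma>. \<forall>xs. length xs = ar R \<longrightarrow> (M (R, xs) \<longleftrightarrow> N (R, map \<pi> xs))"
    using assms(1) unfolding iso_def by blast
  obtain \<rho> where \<rho>: "bij \<rho>" "\<forall>R\<in>\<sigma>. \<forall>xs. length xs = ar R \<longrightarrow> (N (R, xs) \<longleftrightarrow> K (R, map \<rho> xs))"
    using assms(2) unfolding iso_def by blast
  have "M (R, xs) \<longleftrightarrow> K (R, map (\<rho> \<circ> \<pi>) xs)" if "R \<in> \<sigma>" "length xs = ar R" for R xs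
    using \<pi>(2) \<rho>(2) that by simp
  then show ?thesis
    unfolding iso_def using bij_comp[OF \<pi>(1) \<rho>(1)] by blast
qed

section \<open>Dedekind's categoricity theorem\<close>

locale peano_system =
  fixes add mul :: "'a \<Rightarrow> 'a \<Rightarrow> 'a" and z u :: 'a
  assumes add_z: "add a z = a"
    and add_succ: "add a (add b u) = add (add a b) u"
    and mul_z: "mul a z = z"
    and mul_succ: "mul a (add b u) = add (mul a b) a"
    and succ_neq_z: "add a u \<noteq> z"
    and succ_inj: "add a u = add b u \<Longrightarrow> a = b"
    and induct: "P z \<Longrightarrow> (\<And>a. P a \<Longrightarrow> P (add a u)) \<Longrightarrow> P a"
begin

definition num :: "nat \<Rightarrow> 'a" where
  "num n = ((\<lambda>a. add a u) ^^ n) z"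

lemma num_0: "num 0 = z" and num_Suc: "num (Suc n) = add (num n) u"
  by (simp_all add: num_def)

lemma inj_num: "inj num"
proof -
  have "num m = num n \<Longrightarrow> m = n" for m n
  proof (induction m arbitrary: n)
    case 0 then show ?case
      by (cases n) (use succ_neq_z[symmetric] in \<open>auto simp: num_0 num_Suc\<close>)
  next
    case (Suc m)
    then obtain k where "n = Suc k"
      using succ_neq_z by (cases n) (auto simp: num_0 num_Suc)
    with Suc show ?case
      using succ_inj by (simp add: num_Suc)
  qed
  then show ?thesis by (rule injI)
qed

lemma surj_num: "surj num"
proof -
  have "a \<in> range num" for a
  proof (induction a rule: induct)
    case 1 show ?case using num_0 by (metis rangeI)
  next
    case (2 a)
    then obtain n where "a = num n" by blast
    then show ?case using num_Suc by (metis rangeI)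
  qed
  then show ?thesis by blast
qed

lemma bij_num: "bij num"
  using inj_num surj_num by (rule bijI)

lemma num_add: "num (m + n) = add (num m) (num n)"
  by (induction n) (simp_all add: num_0 num_Suc add_z add_succ)

lemma num_mult: "num (m * n) = mul (num m) (num n)"
proof (induction n)
  case 0 show ?case by (simp add: num_0 mul_z)
next
  case (Suc n)
  have "num (m * Suc n) = add (num (m * n)) (num m)"
    by (metis mult_Suc_right add.commute num_add)
  then show ?case by (simp add: Suc num_Suc mul_succ)
qed

end

definition FAll :: "nat \<Rightarrow> sof \<Rightarrow> sof" where
  "FAll i \<phi> = Neg (Ex i (Neg \<phi>))"

definition FImp :: "sof \<Rightarrow> sof \<Rightarrow> sof" where
  "FImp \<phi> \<psi> = Neg (Conj \<phi> (Neg \<psi>))"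

lemma sat_FAll [simp]: "sat M v V (FAll i \<phi>) = (\<forall>a. sat M (v(i := a)) V \<phi>)"
  by (simp add: FAll_def)

lemma sat_FImp [simp]: "sat M v V (FImp \<phi> \<psi>) = (sat M v V \<phi> \<longrightarrow> sat M v V \<psi>)"
  by (simp add: FImp_def)

definition binop_graph_sof :: "nat \<Rightarrow> sof" where
  "binop_graph_sof k =
     FAll 0 (FAll 1 (Ex 2 (Conj (Rel k [0, 1, 2]) (FAll 3 (FImp (Rel k [0, 1, 3]) (Eq 3 2))))))"

text \<open>Second-order Peano arithmetic for the graphs 0 (addition) and 1 (multiplication),
  with the variables 10 and 11 standing for zero and one; the last conjunct is the
  second-order induction axiom for the successor \<open>x + 1\<close>.\<close>
definition peano_axioms_sof :: sof where
  "peano_axioms_sof =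
    Conj (FAll 0 (Conj (Rel 0 [0,10,0]) (Rel 1 [0,10,10])))
   (Conj (FAll 0 (FAll 1 (FAll 2 (FAll 3 (FAll 4 (FImp (Conj (Rel 0 [0,1,2]) (Conj (Rel 0 [1,11,3]) (Rel 0 [2,11,4]))) (Rel 0 [0,3,4])))))))
   (Conj (FAll 0 (FAll 1 (FAll 2 (FAll 3 (FAll 4 (FImp (Conj (Rel 1 [0,1,2]) (Conj (Rel 0 [1,11,3]) (Rel 0 [2,0,4]))) (Rel 1 [0,3,4])))))))
   (Conj (FAll 0 (FAll 1 (FImp (Rel 0 [0,11,1]) (Neg (Eq 1 10)))))
   (Conj (FAll 0 (FAll 1 (FAll 2 (FImp (Conj (Rel 0 [0,11,2]) (Rel 0 [1,11,2])) (Eq 0 1)))))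
    (Neg (ExR 0 1 (Neg (FImp (Conj (RVar 0 [10]) (FAll 0 (FAll 1 (FImp (Conj (RVar 0 [0]) (Rel 0 [0,11,1])) (RVar 0 [1])))))
        (FAll 0 (RVar 0 [0]))))))))))"

definition peano_sof :: sof where
  "peano_sof = Conj (binop_graph_sof 0) (Conj (binop_graph_sof 1) (Ex 10 (Ex 11 peano_axioms_sof)))"

lemma sentence_peano_sof: "sentence peano_sof"
  by (simp add: sentence_def peano_sof_def peano_axioms_sof_def binop_graph_sof_def FAll_def FImp_def) auto

lemma wf_peano_sof: "wf_sof arith_sig arith_ar peano_sof"
  by (simp add: peano_sof_def peano_axioms_sof_def binop_graph_sof_def FAll_def FImp_def
      arith_sig_def arith_ar_def)

lemma models_peano_sof_graphs:
  assumes "models M peano_sof"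
  shows "\<forall>a b. \<exists>c. M (0,[a,b,c]) \<and> (\<forall>d. M (0,[a,b,d]) \<longrightarrow> d = c)"
    and "\<forall>a b. \<exists>c. M (1,[a,b,c]) \<and> (\<forall>d. M (1,[a,b,d]) \<longrightarrow> d = c)"
  using assms by (simp_all add: models_def peano_sof_def binop_graph_sof_def)

lemma models_peano_sof_axioms:
  assumes "models M peano_sof"
  shows "\<exists>z u. (\<forall>a. M (0,[a,z,a]) \<and> M (1,[a,z,z]))
       \<and> (\<forall>a b c d e. M (0,[a,b,c]) \<and> M (0,[b,u,d]) \<and> M (0,[c,u,e]) \<longrightarrow> M (0,[a,d,e]))
       \<and> (\<forall>a b c d e. M (1,[a,b,c]) \<and> M (0,[b,u,d]) \<and> M (0,[c,a,e]) \<longrightarrow> M (1,[a,d,e]))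
       \<and> (\<forall>a b. M (0,[a,u,b]) \<longrightarrow> b \<noteq> z)
       \<and> (\<forall>a b. (\<exists>c. M (0,[a,u,c]) \<and> M (0,[b,u,c])) \<longrightarrow> a = b)
       \<and> (\<forall>P. P [z] \<longrightarrow> (\<exists>xs. P xs \<and> length xs \<noteq> Suc 0)
              \<or> (\<exists>a. P [a] \<and> (\<exists>b. M (0,[a,u,b]) \<and> \<not> P [b])) \<or> (\<forall>a. P [a]))"
  using assms by (simp add: models_def peano_sof_def peano_axioms_sof_def)

definition arith_enum :: "code \<Rightarrow> (nat \<Rightarrow> nat) \<Rightarrow> bool" where
  "arith_enum M e \<longleftrightarrow> bij e \<and> (\<forall>a b c. M (0, [e a, e b, e c]) = (a + b = c))
     \<and> (\<forall>a b c. M (1, [e a, e b, e c]) = (a * b = c))"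

lemma functional_graph_iff:
  assumes "\<exists>c. G c \<and> (\<forall>d. G d \<longrightarrow> d = c)"
  shows "G c \<longleftrightarrow> (THE c. G c) = c"
proof -
  obtain c0 where c0: "G c0" "\<forall>d. G d \<longrightarrow> d = c0" using assms by blast
  have "(THE c. G c) = c0" by (rule the_equality) (use c0 in blast)+
  then show ?thesis using c0 by blast
qed

definition add_of :: "code \<Rightarrow> nat \<Rightarrow> nat \<Rightarrow> nat" where
  "add_of M a b = (THE c. M (0, [a, b, c]))"

definition mul_of :: "code \<Rightarrow> nat \<Rightarrow> nat \<Rightarrow> nat" where
  "mul_of M a b = (THE c. M (1, [a, b, c]))"

lemma models_peano_sof_add_of: "models M peano_sof \<Longrightarrow> M (0, [a, b, c]) \<longleftrightarrow> add_of M a b = c"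
  unfolding add_of_def using models_peano_sof_graphs(1) by (intro functional_graph_iff) blast

lemma models_peano_sof_mul_of: "models M peano_sof \<Longrightarrow> M (1, [a, b, c]) \<longleftrightarrow> mul_of M a b = c"
  unfolding mul_of_def using models_peano_sof_graphs(2) by (intro functional_graph_iff) blast

lemma models_peano_sof_peano_system:
  assumes "models M peano_sof"
  shows "\<exists>z u. peano_system (add_of M) (mul_of M) z u"
proof -
  obtain z u where
        z: "\<forall>a. M (0,[a,z,a]) \<and> M (1,[a,z,z])"
    and add_succ: "\<forall>a b c d e. M (0,[a,b,c]) \<and> M (0,[b,u,d]) \<and> M (0,[c,u,e]) \<longrightarrow> M (0,[a,d,e])"
    and mul_succ: "\<forall>a b c d e. M (1,[a,b,c]) \<and> M (0,[b,u,d]) \<and> M (0,[c,a,e]) \<longrightarrow> M (1,[a,d,e])"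
    and succ_neq: "\<forall>a b. M (0,[a,u,b]) \<longrightarrow> b \<noteq> z"
    and succ_inj: "\<forall>a b. (\<exists>c. M (0,[a,u,c]) \<and> M (0,[b,u,c])) \<longrightarrow> a = b"
    and induct: "\<forall>P. P [z] \<longrightarrow> (\<exists>xs. P xs \<and> length xs \<noteq> Suc 0)
              \<or> (\<exists>a. P [a] \<and> (\<exists>b. M (0,[a,u,b]) \<and> \<not> P [b])) \<or> (\<forall>a. P [a])"
    using models_peano_sof_axioms[OF assms] by (elim conjE exE) (rule that; assumption)
  note add = models_peano_sof_add_of[OF assms] and mul = models_peano_sof_mul_of[OF assms]
  have "peano_system (add_of M) (mul_of M) z u"
  proof
    fix a b :: nat and P :: "nat \<Rightarrow> bool"
    show "add_of M a z = a" "mul_of M a z = z" using z add mul by simp_all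
    have "M (0, [a, add_of M b u, add_of M (add_of M a b) u])"
      by (rule add_succ[rule_format, of a b "add_of M a b"]) (use add in blast)
    then show "add_of M a (add_of M b u) = add_of M (add_of M a b) u" by (simp add: add)
    have "M (1, [a, add_of M b u, add_of M (mul_of M a b) a])"
      by (rule mul_succ[rule_format, of a b "mul_of M a b"]) (use add mul in blast)
    then show "mul_of M a (add_of M b u) = add_of M (mul_of M a b) a" using mul by blast
    show "add_of M a u \<noteq> z" using succ_neq add by simp
    show "add_of M a u = add_of M b u \<Longrightarrow> a = b" using succ_inj add by blast
    assume "P z" and step: "\<And>a. P a \<Longrightarrow> P (add_of M a u)"
    have "\<not> (\<exists>a. P a \<and> (\<exists>b. M (0, [a, u, b]) \<and> \<not> P b))"
      using step by (simp add: add)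
    then show "P a"
      using induct[rule_format, of "\<lambda>xs. \<exists>a. xs = [a] \<and> P a"] \<open>P z\<close> by auto
  qed
  then show ?thesis by blast
qed

lemma models_peano_sof_imp_arith_enum:
  assumes "models M peano_sof"
  shows "\<exists>e. arith_enum M e"
proof -
  obtain z u where "peano_system (add_of M) (mul_of M) z u"
    using models_peano_sof_peano_system[OF assms] by blast
  then interpret peano_system "add_of M" "mul_of M" z u .
  have "arith_enum M num"
    unfolding arith_enum_def
    by (simp add: models_peano_sof_add_of[OF assms] models_peano_sof_mul_of[OF assms, simplified]
        bij_num inj_num[THEN inj_eq] flip: num_add num_mult)
  then show ?thesis by blast
qed

definition zero_of :: "code \<Rightarrow> nat" where
  "zero_of M = (THE z. M (0, [z, z, z]))"

definition one_of :: "code \<Rightarrow> nat" where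
  "one_of M = (THE u. M (1, [u, u, u]) \<and> \<not> M (0, [u, u, u]))"

definition succ_of :: "code \<Rightarrow> nat \<Rightarrow> nat" where
  "succ_of M a = (THE b. M (0, [a, one_of M, b]))"

definition enum_of :: "code \<Rightarrow> nat \<Rightarrow> nat" where
  "enum_of M n = (succ_of M ^^ n) (zero_of M)"

text \<open>Meaningful only when \<open>M\<close> has an arithmetic enumeration; otherwise \<open>THE\<close> yields junk.\<close>
definition decode :: "code \<Rightarrow> nat \<Rightarrow> bool" where
  "decode M n = M (2, [enum_of M n])"

lemma arith_enum_range: "arith_enum M e \<Longrightarrow> x \<in> range e"
  unfolding arith_enum_def by (metis bij_is_surj surj_def rangeI)

lemma arith_enum_zero_unique:
  assumes "arith_enum M e" "M (0, [z, z, z])" shows "z = e 0"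
proof -
  obtain k where "z = e k" using arith_enum_range[OF assms(1), of z] by blast
  with assms have "k + k = k" by (simp add: arith_enum_def)
  with \<open>z = e k\<close> show ?thesis by simp
qed

lemma arith_enum_one_unique:
  assumes "arith_enum M e" "M (1, [u, u, u])" "\<not> M (0, [u, u, u])" shows "u = e 1"
proof -
  obtain k where "u = e k" using arith_enum_range[OF assms(1), of u] by blast
  with assms have "k * k = k" "k + k \<noteq> k" by (simp_all add: arith_enum_def)
  then have "k = 1" by (metis mult_eq_self_implies_10 add_0)
  with \<open>u = e k\<close> show ?thesis by simp
qed

lemma arith_enum_succ_unique:
  assumes "arith_enum M e" "M (0, [e k, e 1, b])" shows "b = e (Suc k)"
proof -
  obtain j where "b = e j" using arith_enum_range[OF assms(1), of b] by blast
  with assms have "k + 1 = j" by (simp add: arith_enum_def)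
  with \<open>b = e j\<close> show ?thesis by simp
qed

lemma zero_of_eq: assumes "arith_enum M e" shows "zero_of M = e 0"
  unfolding zero_of_def
proof (rule the_equality)
  show "M (0, [e 0, e 0, e 0])" using assms by (simp add: arith_enum_def)
qed (rule arith_enum_zero_unique[OF assms])

lemma one_of_eq: assumes "arith_enum M e" shows "one_of M = e 1"
  unfolding one_of_def
proof (rule the_equality)
  show "M (1, [e 1, e 1, e 1]) \<and> \<not> M (0, [e 1, e 1, e 1])" using assms by (simp add: arith_enum_def)
qed (use arith_enum_one_unique[OF assms] in blast)

lemma succ_of_eq: assumes "arith_enum M e" shows "succ_of M (e k) = e (Suc k)"
  unfolding succ_of_def one_of_eq[OF assms]
proof (rule the_equality)
  show "M (0, [e k, e 1, e (Suc k)])" using assms by (simp add: arith_enum_def)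
qed (rule arith_enum_succ_unique[OF assms])

lemma enum_of_eq: "arith_enum M e \<Longrightarrow> enum_of M = e"
proof
  fix n assume "arith_enum M e"
  then show "enum_of M n = e n"
    by (induction n) (simp_all add: enum_of_def zero_of_eq succ_of_eq)
qed

lemma arith_enum_arith_struct: "arith_enum (arith_struct x) id"
  by (simp add: arith_enum_def)

lemma decode_arith_struct: "decode (arith_struct x) = x"
  by (simp add: fun_eq_iff decode_def enum_of_eq[OF arith_enum_arith_struct])

lemma models_arith_struct_peano_sof: "models (arith_struct x) peano_sof"
proof -
  have "(\<exists>b. P [b] \<and> \<not> P [b + 1]) \<or> (\<forall>a. P [a])" if "P [0]" for P :: "nat list \<Rightarrow> bool"
  proof (cases "\<exists>b. P [b] \<and> \<not> P [b + 1]")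
    case False
    have "P [a]" for a by (induction a) (use that False in auto)
    then show ?thesis by blast
  qed blast
  then show ?thesis
    by (simp add: models_def peano_sof_def peano_axioms_sof_def binop_graph_sof_def)
      (intro exI[of _ 1] conjI; simp add: algebra_simps; blast)
qed

lemma is_structure_arith_struct: "is_structure arith_sig arith_ar (arith_struct x)"
  unfolding is_structure_def
  by (auto simp: arith_sig_def arith_ar_def split: if_splits list.splits)

lemma iso_arith_struct_decode:
  assumes "arith_enum M e"
  shows "iso arith_sig arith_ar (arith_struct (decode M)) M"
  unfolding iso_def
proof (intro exI conjI ballI allI impI)
  show "bij e" using assms by (simp add: arith_enum_def)
  fix R and xs :: "nat list" assume "R \<in> arith_sig" and len: "length xs = arith_ar R"
  then consider "R = 0" | "R = 1" | "R = 2" by (auto simp: arith_sig_def)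
  then show "arith_struct (decode M) (R, xs) = M (R, map e xs)"
  proof cases
    case 1
    with len obtain a b c where "xs = [a, b, c]"
      by (auto simp: arith_ar_def length_Suc_conv numeral_3_eq_3)
    with 1 assms show ?thesis by (simp add: arith_enum_def)
  next
    case 2
    with len obtain a b c where "xs = [a, b, c]"
      by (auto simp: arith_ar_def length_Suc_conv numeral_3_eq_3)
    with 2 assms show ?thesis by (simp add: arith_enum_def)
  next
    case 3
    with len obtain a where "xs = [a]" by (auto simp: arith_ar_def length_Suc_conv)
    with 3 assms show ?thesis by (simp add: decode_def enum_of_eq)
  qed
qed

lemma decode_eq_if_iso:
  assumes "iso arith_sig arith_ar M N" "arith_enum M e"
  shows "decode M = decode N"
proof -
  obtain \<pi> where \<pi>: "bij \<pi>"
    "\<forall>R\<in>arith_sig. \<forall>xs. length xs = arith_ar R \<longrightarrow> (M (R, xs) \<longleftrightarrow> N (R, map \<pi> xs))"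
    using assms(1) unfolding iso_def by blast
  have "M (R, xs) = N (R, map \<pi> xs)" if "R \<in> {0, 1}" "length xs = 3" for R xs
    using \<pi>(2) that by (auto simp: arith_sig_def arith_ar_def)
  then have "arith_enum N (\<pi> \<circ> e)"
    using \<pi>(1) assms(2) by (auto simp: arith_enum_def bij_comp simp flip: map_map)
  moreover have "M (2, [a]) = N (2, [\<pi> a])" for a
    using \<pi>(2) by (auto simp: arith_sig_def arith_ar_def)
  ultimately show ?thesis
    using enum_of_eq[OF assms(2)] enum_of_eq[of N "\<pi> \<circ> e"] by (simp add: fun_eq_iff decode_def)
qed

section \<open>Continuity of reading off the real\<close>

text \<open>These atomic facts pin down zero, one and the first \<open>n\<close> successor steps, hence the
  \<open>n\<close>-th bit, in every code with an arithmetic enumeration.\<close>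
definition decode_support :: "code \<Rightarrow> nat \<Rightarrow> (nat \<times> nat list) set" where
  "decode_support M n =
     {(0, [zero_of M, zero_of M, zero_of M]), (1, [one_of M, one_of M, one_of M]),
      (0, [one_of M, one_of M, one_of M]), (2, [enum_of M n])}
     \<union> (\<lambda>k. (0, [enum_of M k, one_of M, enum_of M (Suc k)])) ` {..<n}"

lemma finite_decode_support: "finite (decode_support M n)"
  by (simp add: decode_support_def)

lemma decode_eq_if_agree:
  assumes M: "arith_enum M e" and N: "arith_enum N e'"
    and agree: "\<forall>c\<in>decode_support M n. N c = M c"
  shows "decode N n = decode M n"
proof -
  have agree': "N c = M c" if "c \<in> decode_support M n" for c
    using agree that by blast
  have zero: "e' 0 = e 0"
    using arith_enum_zero_unique[OF N, of "e 0"] agree'[of "(0, [e 0, e 0, e 0])"] M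
    by (simp add: decode_support_def zero_of_eq arith_enum_def)
  have one: "e' 1 = e 1"
    using arith_enum_one_unique[OF N, of "e 1"] agree'[of "(1, [e 1, e 1, e 1])"]
      agree'[of "(0, [e 1, e 1, e 1])"] M
    by (simp add: decode_support_def one_of_eq arith_enum_def)
  have "e' k = e k" if "k \<le> n" for k
    using that
  proof (induction k)
    case 0 show ?case by (rule zero)
  next
    case (Suc k)
    have "N (0, [e k, e 1, e (Suc k)])"
      using agree'[of "(0, [e k, e 1, e (Suc k)])"] Suc.prems M
      by (simp add: decode_support_def zero_of_eq one_of_eq enum_of_eq arith_enum_def)
    then show ?case
      using arith_enum_succ_unique[OF N, of k "e (Suc k)"] Suc one by simp
  qed
  then show ?thesis
    using agree'[of "(2, [e n])"] M N
    by (simp add: decode_def decode_support_def enum_of_eq)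
qed

lemma topspace_code_top [simp]: "topspace code_top = UNIV"
  by (simp add: code_top_def)

lemma openin_code_top_coordinate: "openin code_top {N. N c = b}"
proof -
  have "continuous_map code_top (discrete_topology UNIV) (\<lambda>N. N c)"
    unfolding code_top_def by (rule continuous_map_product_projection) simp
  then show ?thesis
    using openin_continuous_map_preimage[of code_top _ "\<lambda>N. N c" "{b}"] by simp
qed

lemma openin_code_top_agree: "finite F \<Longrightarrow> openin code_top {N. \<forall>c\<in>F. N c = M c}"
proof (induction F rule: finite_induct)
  case (insert c F)
  have "{N. \<forall>c'\<in>insert c F. N c' = M c'} = {N. N c = M c} \<inter> {N. \<forall>c\<in>F. N c = M c}" by auto
  then show ?case using openin_code_top_coordinate insert.IH by (simp add: openin_Int)
qed (use openin_topspace[of code_top] in simp)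

lemma closedin_structures: "closedin code_top {M. is_structure \<sigma> ar M}"
proof -
  let ?bad = "{c. \<not> (fst c \<in> \<sigma> \<and> length (snd c) = ar (fst c))}"
  have "UNIV - {M. is_structure \<sigma> ar M} = (\<Union>c\<in>?bad. {N. N c = True})"
    unfolding is_structure_def by fastforce
  moreover have "openin code_top (\<Union>c\<in>?bad. {N. N c = True})"
    using openin_code_top_coordinate by blast
  ultimately show ?thesis unfolding closedin_def by simp
qed

lemma compact_space_code_top: "compact_space code_top"
  unfolding code_top_def
  by (simp add: compact_space_product_topology compact_space_discrete_topology)

lemma Hausdorff_space_cantor: "Hausdorff_space cantor"
  unfolding cantor_def by (simp add: Hausdorff_space_product_topology)

lemma continuous_map_decode:
  assumes "\<And>M. M \<in> P \<Longrightarrow> \<exists>e. arith_enum M e"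
  shows "continuous_map (subtopology code_top P) cantor decode"
  unfolding cantor_def continuous_map_componentwise_UNIV
proof
  fix n
  let ?X = "subtopology code_top P"
  have nbhd: "\<exists>T. openin ?X T \<and> M \<in> T \<and> T \<subseteq> topspace ?X \<inter> (\<lambda>M. decode M n) -` U"
    if M: "M \<in> topspace ?X \<inter> (\<lambda>M. decode M n) -` U" for M U
  proof (intro exI conjI)
    let ?T = "P \<inter> {N. \<forall>c\<in>decode_support M n. N c = M c}"
    show "openin ?X ?T"
      by (intro openin_subtopology_Int2 openin_code_top_agree finite_decode_support)
    show "M \<in> ?T" using M by simp
    obtain e where e: "arith_enum M e" using assms M by auto
    show "?T \<subseteq> topspace ?X \<inter> (\<lambda>M. decode M n) -` U"
    proof
      fix N assume N: "N \<in> ?T"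
      then obtain e' where "arith_enum N e'" using assms by blast
      then have "decode N n = decode M n" using decode_eq_if_agree[OF e] N by blast
      then show "N \<in> topspace ?X \<inter> (\<lambda>M. decode M n) -` U" using N M by simp
    qed
  qed
  show "continuous_map ?X (discrete_topology UNIV) (\<lambda>M. decode M n)"
    unfolding continuous_map_openin_preimage_eq
  proof (intro conjI allI impI)
    fix U :: "bool set"
    show "openin ?X (topspace ?X \<inter> (\<lambda>M. decode M n) -` U)"
      using nbhd by (subst openin_subopen) blast
  qed simp
qed

lemma perfect_in_continuous_injective_image:
  assumes "compactin X P" "P \<noteq> {}" "P \<subseteq> X derived_set_of P"
    and "Hausdorff_space Y" "continuous_map (subtopology X P) Y f" "inj_on f P"
  shows "perfect_in Y (f ` P)"
proof -
  have "compactin (subtopology X P) P" using assms(1) by (simp add: compactin_subtopology)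
  then have "compactin Y (f ` P)" using assms(5) by (rule image_compactin)
  then have closed: "closedin Y (f ` P)" by (rule compactin_imp_closedin[OF assms(4)])
  have "f M \<in> Y derived_set_of (f ` P)" if M: "M \<in> P" for M
    unfolding in_derived_set_of
  proof (intro conjI allI impI)
    have "M \<in> X derived_set_of P" using assms(3) M by blast
    then have MX: "M \<in> topspace (subtopology X P)"
      using M derived_set_of_subset_topspace by fastforce
    then show "f M \<in> topspace Y"
      using continuous_map_image_subset_topspace[OF assms(5)] by blast
    fix U assume U: "f M \<in> U \<and> openin Y U"
    have "openin (subtopology X P) {N \<in> topspace (subtopology X P). f N \<in> U}"
      using assms(5) U by (blast intro: openin_continuous_map_preimage)
    then obtain G where G: "openin X G" "{N \<in> topspace (subtopology X P). f N \<in> U} = G \<inter> P"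
      unfolding openin_subtopology by auto
    have "M \<in> G" using G(2) MX U by blast
    then obtain M' where M': "M' \<noteq> M" "M' \<in> P" "M' \<in> G"
      using \<open>M \<in> X derived_set_of P\<close> G(1) unfolding in_derived_set_of by blast
    then have "M' \<in> {N \<in> topspace (subtopology X P). f N \<in> U}" using G(2) by blast
    then have "f M' \<in> U" by simp
    moreover have "f M' \<noteq> f M" using assms(6) M M' by (metis inj_on_eq_iff)
    ultimately show "\<exists>y. y \<noteq> f M \<and> y \<in> f ` P \<and> y \<in> U" using M' by blast
  qed
  then show ?thesis
    unfolding perfect_in_def using assms(2) closed by blast
qed

lemma at_most_aleph1_inj_on:
  assumes "inj_on f A" "f ` A \<subseteq> B" "at_most_aleph1 B"
  shows "at_most_aleph1 A"
proof -
  have "ordLeq3 (card_of A) (card_of B)"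
    using card_of_ordLeq[of A B] assms(1,2) by blast
  then show ?thesis
    using assms(3) unfolding at_most_aleph1_def by (rule ordLeq_transitive)
qed

lemma arith_struct_in_Mods_iff:
  "arith_struct x \<in> Mods arith_sig arith_ar {peano_sof, \<phi>} \<longleftrightarrow> models (arith_struct x) \<phi>"
  by (simp add: Mods_def is_structure_arith_struct models_arith_struct_peano_sof)

lemma Mods_peano_imp_arith_enum:
  "M \<in> Mods arith_sig arith_ar {peano_sof, \<phi>} \<Longrightarrow> \<exists>e. arith_enum M e"
  by (simp add: Mods_def models_peano_sof_imp_arith_enum)

lemma Mods_peano_imp_models_decode:
  assumes "M \<in> Mods arith_sig arith_ar {peano_sof, \<phi>}" "sentence \<phi>" "wf_sof arith_sig arith_ar \<phi>"
  shows "models (arith_struct (decode M)) \<phi>"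
proof -
  obtain e where "arith_enum M e" using Mods_peano_imp_arith_enum[OF assms(1)] ..
  then have "iso arith_sig arith_ar (arith_struct (decode M)) M" by (rule iso_arith_struct_decode)
  then obtain \<pi> where "bij \<pi>" and "\<forall>R\<in>arith_sig. \<forall>xs. length xs = arith_ar R \<longrightarrow>
      (arith_struct (decode M) (R, xs) \<longleftrightarrow> M (R, map \<pi> xs))"
    unfolding iso_def by blast
  then have "models (arith_struct (decode M)) \<phi> = models M \<phi>"
    by (intro models_iso[OF _ _ assms(3,2)]) simp_all
  then show ?thesis using assms(1) by (simp add: Mods_def)
qed

lemma inj_iso_class_arith_struct:
  "inj (\<lambda>x. iso_rel arith_sig arith_ar `` {arith_struct x})"
proof (rule injI)
  fix x y
  assume eq: "iso_rel arith_sig arith_ar `` {arith_struct x} = iso_rel arith_sig arith_ar `` {arith_struct y}"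
  have "arith_struct y \<in> iso_rel arith_sig arith_ar `` {arith_struct y}"
    by (simp add: iso_rel_def iso_refl)
  then have "iso arith_sig arith_ar (arith_struct x) (arith_struct y)"
    unfolding eq[symmetric] by (simp add: iso_rel_def)
  then have "decode (arith_struct x) = decode (arith_struct y)"
    using arith_enum_arith_struct by (rule decode_eq_if_iso)
  then show "x = y" by (simp only: decode_arith_struct)
qed

lemma inj_on_decode_pairwise_nonisomorphic:
  assumes "P \<subseteq> Mods arith_sig arith_ar {peano_sof, \<phi>}"
    and "\<forall>M\<in>P. \<forall>N\<in>P. M \<noteq> N \<longrightarrow> \<not> iso arith_sig arith_ar M N"
  shows "inj_on decode P"
proof (rule inj_onI)
  fix M N assume M: "M \<in> P" and N: "N \<in> P" and eq: "decode M = decode N"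
  have iso_decode: "iso arith_sig arith_ar (arith_struct (decode K)) K" if "K \<in> P" for K
    using that assms(1) Mods_peano_imp_arith_enum iso_arith_struct_decode by blast
  have "iso arith_sig arith_ar M (arith_struct (decode M))"
    using iso_decode[OF M] by (rule iso_sym)
  moreover have "iso arith_sig arith_ar (arith_struct (decode M)) N"
    using iso_decode[OF N] eq by simp
  ultimately have "iso arith_sig arith_ar M N" by (rule iso_trans)
  then show "M = N" using assms(2) M N by blast
qed

lemma perfect_in_decode_image:
  assumes "P \<subseteq> Mods arith_sig arith_ar {peano_sof, \<phi>}"
    and "perfect_in (code_space arith_sig arith_ar) P"
    and "\<forall>M\<in>P. \<forall>N\<in>P. M \<noteq> N \<longrightarrow> \<not> iso arith_sig arith_ar M N"
  shows "perfect_in cantor (decode ` P)"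
proof (rule perfect_in_continuous_injective_image)
  let ?S = "{M. is_structure arith_sig arith_ar M}"
  have "?S \<inter> P = P" using assms(1) by (auto simp: Mods_def)
  have "closedin (code_space arith_sig arith_ar) P" using assms(2) by (simp add: perfect_in_def)
  then have "closedin code_top P"
    unfolding code_space_def using closedin_structures by (rule closedin_trans_full)
  then show "compactin code_top P"
    by (rule closedin_compact_space[OF compact_space_code_top])
  show "P \<noteq> {}" using assms(2) by (simp add: perfect_in_def)
  have "P \<subseteq> code_space arith_sig arith_ar derived_set_of P" using assms(2) by (simp add: perfect_in_def)
  then show "P \<subseteq> code_top derived_set_of P"
    unfolding code_space_def derived_set_of_subtopology \<open>?S \<inter> P = P\<close> by blast
  show "continuous_map (subtopology code_top P) cantor decode"
    by (rule continuous_map_decode) (use assms(1) Mods_peano_imp_arith_enum in blast)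
  show "inj_on decode P"
    using assms(1,3) by (rule inj_on_decode_pairwise_nonisomorphic)
qed (rule Hausdorff_space_cantor)

lemma at_most_aleph1_if_few_models:
  assumes "at_most_aleph1 (Mods arith_sig arith_ar {peano_sof, \<phi>} // iso_rel arith_sig arith_ar)"
  shows "at_most_aleph1 {x. models (arith_struct x) \<phi>}"
proof (rule at_most_aleph1_inj_on[OF inj_on_subset[OF inj_iso_class_arith_struct subset_UNIV] _ assms])
  show "(\<lambda>x. iso_rel arith_sig arith_ar `` {arith_struct x}) ` {x. models (arith_struct x) \<phi>}
      \<subseteq> Mods arith_sig arith_ar {peano_sof, \<phi>} // iso_rel arith_sig arith_ar"
    using arith_struct_in_Mods_iff by (blast intro: quotientI)
qed

lemma perfect_subset_if_perfect_models:
  assumes "sentence \<phi>" "wf_sof arith_sig arith_ar \<phi>"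
    and "P \<subseteq> Mods arith_sig arith_ar {peano_sof, \<phi>}"
    and "perfect_in (code_space arith_sig arith_ar) P"
    and "\<forall>M\<in>P. \<forall>N\<in>P. M \<noteq> N \<longrightarrow> \<not> iso arith_sig arith_ar M N"
  shows "\<exists>Q \<subseteq> {x. models (arith_struct x) \<phi>}. perfect_in cantor Q"
proof (intro exI conjI)
  show "decode ` P \<subseteq> {x. models (arith_struct x) \<phi>}"
    using assms(3) Mods_peano_imp_models_decode[OF _ assms(1,2)] by blast
  show "perfect_in cantor (decode ` P)"
    using assms(3-5) by (rule perfect_in_decode_image)
qed

theorem lemma1p12:
  assumes "SO_Absolute_Morley"
  shows "\<forall>A. lightface_projective A \<longrightarrow>
           at_most_aleph1 A \<or> (\<exists>P \<subseteq> A. perfect_in cantor P)"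
proof (intro allI impI)
  fix A assume "lightface_projective A"
  then obtain \<phi> where \<phi>: "sentence \<phi>" "wf_sof arith_sig arith_ar \<phi>"
    and A: "A = {x. models (arith_struct x) \<phi>}"
    unfolding lightface_projective_def by blast
  let ?Mods = "Mods arith_sig arith_ar {peano_sof, \<phi>}"
  have "second_order_theory arith_sig arith_ar {peano_sof, \<phi>}"
    using \<phi> sentence_peano_sof wf_peano_sof by (simp add: second_order_theory_def)
  with assms have "at_most_aleph1 (?Mods // iso_rel arith_sig arith_ar)
     \<or> (\<exists>P \<subseteq> ?Mods. perfect_in (code_space arith_sig arith_ar) P \<and>
          (\<forall>M\<in>P. \<forall>N\<in>P. M \<noteq> N \<longrightarrow> \<not> iso arith_sig arith_ar M N))"
    unfolding SO_Absolute_Morley_def by blast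
  then show "at_most_aleph1 A \<or> (\<exists>P \<subseteq> A. perfect_in cantor P)"
    unfolding A
    using at_most_aleph1_if_few_models perfect_subset_if_perfect_models[OF \<phi>] by blast
qed

end
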